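(* Let $(u_S,u_R)$ be a transparent environment satisfying no-duplicate-actions. If commitment has no value, then there exists a simple babbling cheap-talk equilibrium $(\sigma,\rho)$ with $U_S(\sigma,\rho)$ equal to the persuasion payoff.
   Context: $A$ and $\Omega$ are finite nonempty sets, $\mu_0$ a prior on $\Omega$ with $\mu_0(\omega)>0$ for all $\omega$, $M$ a finite message set with $|M|>\max\{|\Omega|,|A|\}$. An environment is a pair of functions $u_S,u_R:A\times\Omega\to[0,1]$. It is transparent if there is $v:A\to\mathbb R$ with $u_S(a,\omega)=v(a)$ for all $a,\omega$; it satisfies no-duplicate-actions if $v(a)\ne v(a')$ for all $a\ne a'$. Messaging strategies $\sigma:\Omega\to\Delta M$, action strategies $\rho:M\to\Delta A$, $U_i(\sigma,\rho)=\sum_{\omega,m,a}\mu_0(\omega)\sigma(m|\omega)\rho(a|m)u_i(a,\omega)$. $(\sigma,\rho)$ is S-BR if $\sigma\in\arg\max_{\sigma'}U_S(\sigma',\rho)$ and R-BR if $\rho\in\arg\max_{\rho'}U_R(\sigma,\rho')$; a cheap-talk equilibrium is both. Persuasion payoff: max of $U_S$ over R-BR profiles; cheap-talk payoff: max over cheap-talk equilibria; commitment has no value if they are equal. $M_\sigma=\{m:\sigma(m|\omega)>0\text{ for some }\omega\}$. A simple babbling cheap-talk equilibrium is a cheap-talk equilibrium $(\sigma,\rho)$ with $|M_\sigma|=1$ and some $a_0\in A$ such that $\rho(a_0|m)=1$ for all $m\in M$. *)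

theory Defs
  imports Complex_Main "HOL-Library.Cardinality"
begin

definition is_dist :: "('x::finite \<Rightarrow> real) \<Rightarrow> bool" where
  "is_dist p \<longleftrightarrow> (\<forall>x. 0 \<le> p x) \<and> sum p UNIV = 1"

definition msg_strat :: "('w::finite \<Rightarrow> 'm::finite \<Rightarrow> real) \<Rightarrow> bool" where
  "msg_strat \<sigma> \<longleftrightarrow> (\<forall>w. is_dist (\<sigma> w))"

definition act_strat :: "('m::finite \<Rightarrow> 'a::finite \<Rightarrow> real) \<Rightarrow> bool" where
  "act_strat \<rho> \<longleftrightarrow> (\<forall>m. is_dist (\<rho> m))"

definition payoff ::
  "('w::finite \<Rightarrow> real) \<Rightarrow> ('a::finite \<Rightarrow> 'w \<Rightarrow> real) \<Rightarrow> ('w \<Rightarrow> 'm::finite \<Rightarrow> real)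
     \<Rightarrow> ('m \<Rightarrow> 'a \<Rightarrow> real) \<Rightarrow> real" where
  "payoff \<mu> u \<sigma> \<rho> = (\<Sum>w\<in>UNIV. \<Sum>m\<in>UNIV. \<Sum>a\<in>UNIV. \<mu> w * \<sigma> w m * \<rho> m a * u a w)"

definition S_BR ::
  "('w::finite \<Rightarrow> real) \<Rightarrow> ('a::finite \<Rightarrow> 'w \<Rightarrow> real) \<Rightarrow> ('w \<Rightarrow> 'm::finite \<Rightarrow> real)
     \<Rightarrow> ('m \<Rightarrow> 'a \<Rightarrow> real) \<Rightarrow> bool" where
  "S_BR \<mu> uS \<sigma> \<rho> \<longleftrightarrow> msg_strat \<sigma> \<and> act_strat \<rho> \<and>
     (\<forall>\<sigma>'. msg_strat \<sigma>' \<longrightarrow> payoff \<mu> uS \<sigma>' \<rho> \<le> payoff \<mu> uS \<sigma> \<rho>)"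

definition R_BR ::
  "('w::finite \<Rightarrow> real) \<Rightarrow> ('a::finite \<Rightarrow> 'w \<Rightarrow> real) \<Rightarrow> ('w \<Rightarrow> 'm::finite \<Rightarrow> real)
     \<Rightarrow> ('m \<Rightarrow> 'a \<Rightarrow> real) \<Rightarrow> bool" where
  "R_BR \<mu> uR \<sigma> \<rho> \<longleftrightarrow> msg_strat \<sigma> \<and> act_strat \<rho> \<and>
     (\<forall>\<rho>'. act_strat \<rho>' \<longrightarrow> payoff \<mu> uR \<sigma> \<rho>' \<le> payoff \<mu> uR \<sigma> \<rho>)"

definition cheap_talk_eq ::
  "('w::finite \<Rightarrow> real) \<Rightarrow> ('a::finite \<Rightarrow> 'w \<Rightarrow> real) \<Rightarrow> ('a \<Rightarrow> 'w \<Rightarrow> real)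
     \<Rightarrow> ('w \<Rightarrow> 'm::finite \<Rightarrow> real) \<Rightarrow> ('m \<Rightarrow> 'a \<Rightarrow> real) \<Rightarrow> bool" where
  "cheap_talk_eq \<mu> uS uR \<sigma> \<rho> \<longleftrightarrow> S_BR \<mu> uS \<sigma> \<rho> \<and> R_BR \<mu> uR \<sigma> \<rho>"

text \<open>Persuasion payoff: the maximum (here written as the supremum, which is attained)
  of U_S over R-BR profiles; the message type is passed via a type annotation.\<close>

definition persuasion_payoff ::
  "('w::finite \<Rightarrow> real) \<Rightarrow> ('a::finite \<Rightarrow> 'w \<Rightarrow> real) \<Rightarrow> ('a \<Rightarrow> 'w \<Rightarrow> real)
     \<Rightarrow> 'm::finite itself \<Rightarrow> real" where
  "persuasion_payoff \<mu> uS uR (_::'m itself) =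
     Sup {payoff \<mu> uS \<sigma> \<rho> | (\<sigma>::'w \<Rightarrow> 'm \<Rightarrow> real) \<rho>. R_BR \<mu> uR \<sigma> \<rho>}"

definition cheap_talk_payoff ::
  "('w::finite \<Rightarrow> real) \<Rightarrow> ('a::finite \<Rightarrow> 'w \<Rightarrow> real) \<Rightarrow> ('a \<Rightarrow> 'w \<Rightarrow> real)
     \<Rightarrow> 'm::finite itself \<Rightarrow> real" where
  "cheap_talk_payoff \<mu> uS uR (_::'m itself) =
     Sup {payoff \<mu> uS \<sigma> \<rho> | (\<sigma>::'w \<Rightarrow> 'm \<Rightarrow> real) \<rho>. cheap_talk_eq \<mu> uS uR \<sigma> \<rho>}"

definition commitment_no_value ::
  "('w::finite \<Rightarrow> real) \<Rightarrow> ('a::finite \<Rightarrow> 'w \<Rightarrow> real) \<Rightarrow> ('a \<Rightarrow> 'w \<Rightarrow> real)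
     \<Rightarrow> 'm::finite itself \<Rightarrow> bool" where
  "commitment_no_value \<mu> uS uR M \<longleftrightarrow>
     persuasion_payoff \<mu> uS uR M = cheap_talk_payoff \<mu> uS uR M"

definition msgs_used :: "('w \<Rightarrow> 'm \<Rightarrow> real) \<Rightarrow> 'm set" where
  "msgs_used \<sigma> = {m. \<exists>w. \<sigma> w m > 0}"

definition simple_babbling_eq ::
  "('w::finite \<Rightarrow> real) \<Rightarrow> ('a::finite \<Rightarrow> 'w \<Rightarrow> real) \<Rightarrow> ('a \<Rightarrow> 'w \<Rightarrow> real)
     \<Rightarrow> ('w \<Rightarrow> 'm::finite \<Rightarrow> real) \<Rightarrow> ('m \<Rightarrow> 'a \<Rightarrow> real) \<Rightarrow> bool" where
  "simple_babbling_eq \<mu> uS uR \<sigma> \<rho> \<longleftrightarrow> cheap_talk_eq \<mu> uS uR \<sigma> \<rho> \<and>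
     card (msgs_used \<sigma>) = 1 \<and> (\<exists>a0. \<forall>m. \<rho> m a0 = 1)"

definition environment :: "('a \<Rightarrow> 'w \<Rightarrow> real) \<Rightarrow> ('a \<Rightarrow> 'w \<Rightarrow> real) \<Rightarrow> bool" where
  "environment uS uR \<longleftrightarrow> (\<forall>a w. 0 \<le> uS a w \<and> uS a w \<le> 1 \<and> 0 \<le> uR a w \<and> uR a w \<le> 1)"

definition transparent :: "('a \<Rightarrow> 'w \<Rightarrow> real) \<Rightarrow> bool" where
  "transparent uS \<longleftrightarrow> (\<exists>v. \<forall>a w. uS a w = v a)"

definition transparent_no_dup :: "('a \<Rightarrow> 'w \<Rightarrow> real) \<Rightarrow> bool" where
  "transparent_no_dup uS \<longleftrightarrow> (\<exists>v. (\<forall>a w. uS a w = v a) \<and> (\<forall>a a'. a \<noteq> a' \<longrightarrow> v a \<noteq> v a'))"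

end

theory Submission
  imports Defs
begin

text \<open>Since the persuasion payoff \<open>P\<close> is the supremum of the cheap-talk payoffs and the
  transparent sender's utility \<open>v\<close> takes finitely many values, some cheap-talk equilibrium pays
  the sender more than every value of \<open>v\<close> below \<open>P\<close>. A transparent sender is indifferent
  among the messages she uses, so after each used message the receiver has a supported best
  response worth at least the equilibrium payoff, hence at least \<open>P\<close>, to the sender. Playing
  these pure responses is still a best response of the receiver, so it pays the sender at most
  \<open>P\<close>; thus every used message induces an action of value exactly \<open>P\<close>, by no-duplicate-actions
  always the same action \<open>a0\<close>. Being optimal after every used message, \<open>a0\<close> is optimal under
  the prior, and babbling with \<open>a0\<close> pays \<open>P\<close>.\<close>

definition pure_act :: "('m \<Rightarrow> 'a) \<Rightarrow> 'm \<Rightarrow> 'a \<Rightarrow> real" where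
  "pure_act f m a = (if a = f m then 1 else 0)"

definition pure_msg :: "'m \<Rightarrow> 'w \<Rightarrow> 'm \<Rightarrow> real" where
  "pure_msg m0 w m = (if m = m0 then 1 else 0)"

definition msg_prob :: "('w::finite \<Rightarrow> real) \<Rightarrow> ('w \<Rightarrow> 'm \<Rightarrow> real) \<Rightarrow> 'm \<Rightarrow> real" where
  "msg_prob \<mu> \<sigma> m = (\<Sum>w\<in>UNIV. \<mu> w * \<sigma> w m)"

text \<open>Unnormalised: dividing by \<^term>\<open>msg_prob \<mu> \<sigma> m\<close> gives the expected utility of
  action \<open>a\<close> under the posterior after message \<open>m\<close>.\<close>

definition interim_payoff ::
  "('w::finite \<Rightarrow> real) \<Rightarrow> ('a \<Rightarrow> 'w \<Rightarrow> real) \<Rightarrow> ('w \<Rightarrow> 'm \<Rightarrow> real) \<Rightarrow> 'm \<Rightarrow> 'a \<Rightarrow> real" where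
  "interim_payoff \<mu> u \<sigma> m a = (\<Sum>w\<in>UNIV. \<mu> w * \<sigma> w m * u a w)"

definition sender_value :: "('a::finite \<Rightarrow> real) \<Rightarrow> ('m \<Rightarrow> 'a \<Rightarrow> real) \<Rightarrow> 'm \<Rightarrow> real" where
  "sender_value v \<rho> m = (\<Sum>a\<in>UNIV. \<rho> m a * v a)"

lemma msg_strat_nonneg: "msg_strat \<sigma> \<Longrightarrow> 0 \<le> \<sigma> w m"
  by (simp add: msg_strat_def is_dist_def)

lemma msg_strat_sum: "msg_strat \<sigma> \<Longrightarrow> (\<Sum>m\<in>UNIV. \<sigma> w m) = 1"
  by (simp add: msg_strat_def is_dist_def)

lemma act_strat_nonneg: "act_strat \<rho> \<Longrightarrow> 0 \<le> \<rho> m a"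
  by (simp add: act_strat_def is_dist_def)

lemma act_strat_sum: "act_strat \<rho> \<Longrightarrow> (\<Sum>a\<in>UNIV. \<rho> m a) = 1"
  by (simp add: act_strat_def is_dist_def)

lemma msg_strat_pure_msg: "msg_strat (pure_msg m0)"
  by (simp add: msg_strat_def is_dist_def pure_msg_def)

lemma act_strat_pure_act: "act_strat (pure_act f)"
  by (simp add: act_strat_def is_dist_def pure_act_def)

lemma sum_if_eq_mult: "(\<Sum>x\<in>UNIV. (if x = a then c else 0) * g x) = c * (g (a::'x::finite) :: real)"
proof -
  have "(\<Sum>x\<in>UNIV. (if x = a then c else 0) * g x) = (\<Sum>x\<in>UNIV. if x = a then c * g x else 0)"
    by (rule sum.cong) auto
  then show ?thesis by simp
qed

lemma Sup_gap_witness: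
  fixes S X :: "'a::conditionally_complete_linorder set"
  assumes "finite X" "S \<noteq> {}"
  obtains s where "s \<in> S" "\<And>x. x \<in> X \<Longrightarrow> s \<le> x \<Longrightarrow> Sup S \<le> x"
proof (cases "{x \<in> X. x < Sup S} = {}")
  case True
  obtain s where "s \<in> S" using assms(2) by blast
  moreover have "Sup S \<le> x" if "x \<in> X" for x using True that by (auto simp: not_less[symmetric])
  ultimately show ?thesis using that by blast
next
  case False
  let ?t = "Max {x \<in> X. x < Sup S}"
  have "?t < Sup S" using Max_in[OF _ False] assms(1) by auto
  then obtain s where "s \<in> S" "?t < s" using less_cSupD[OF assms(2)] by blast
  moreover have "Sup S \<le> x" if "x \<in> X" "s \<le> x" for x
  proof (rule ccontr)
    assume "\<not> Sup S \<le> x"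
    then have "x \<le> ?t" using that(1) assms(1) by (intro Max_ge) auto
    then show False using \<open>?t < s\<close> that(2) by simp
  qed
  ultimately show ?thesis using that by blast
qed

lemma weighted_mean_le_imp_eq:
  fixes q x :: "'i \<Rightarrow> real"
  assumes "finite I" "\<forall>i\<in>I. 0 \<le> q i" "sum q I = 1" "(\<Sum>i\<in>I. q i * x i) \<le> c"
    and ge: "\<And>i. i \<in> I \<Longrightarrow> 0 < q i \<Longrightarrow> c \<le> x i"
    and i: "i \<in> I" "0 < q i"
  shows "x i = c"
proof -
  have nonneg: "\<forall>j\<in>I. 0 \<le> q j * (x j - c)"
    using assms(2) ge by (metis diff_ge_0_iff_ge mult_eq_0_iff mult_nonneg_nonneg order_le_less)
  have "(\<Sum>j\<in>I. q j * (x j - c)) = (\<Sum>j\<in>I. q j * x j) - c * sum q I"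
    by (simp add: right_diff_distrib sum_subtractf sum_distrib_left mult.commute)
  then have "(\<Sum>j\<in>I. q j * (x j - c)) = (\<Sum>j\<in>I. q j * x j) - c"
    using assms(3) by simp
  moreover have "0 \<le> (\<Sum>j\<in>I. q j * (x j - c))"
    using nonneg by (simp add: sum_nonneg)
  ultimately have "(\<Sum>j\<in>I. q j * (x j - c)) = 0"
    using assms(4) by simp
  then have "\<forall>j\<in>I. q j * (x j - c) = 0" using nonneg assms(1) by (simp add: sum_nonneg_eq_0_iff)
  then have "q i * (x i - c) = 0" using i(1) by blast
  then show ?thesis using i(2) by simp
qed

lemma sum_pure_act_mult: "(\<Sum>a\<in>UNIV. pure_act f m (a::'a::finite) * g a) = g (f m)"
  unfolding pure_act_def sum_if_eq_mult by simp

lemma payoff_eq_sum_interim_payoff: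
  "payoff \<mu> u \<sigma> \<rho> = (\<Sum>m\<in>UNIV. \<Sum>a\<in>UNIV. \<rho> m a * interim_payoff \<mu> u \<sigma> m a)"
proof -
  have "payoff \<mu> u \<sigma> \<rho> = (\<Sum>m\<in>UNIV. \<Sum>w\<in>UNIV. \<Sum>a\<in>UNIV. \<mu> w * \<sigma> w m * \<rho> m a * u a w)"
    unfolding payoff_def by (rule sum.swap)
  also have "\<dots> = (\<Sum>m\<in>UNIV. \<Sum>a\<in>UNIV. \<Sum>w\<in>UNIV. \<mu> w * \<sigma> w m * \<rho> m a * u a w)"
    by (rule sum.cong[OF refl], rule sum.swap)
  finally show ?thesis
    by (simp add: interim_payoff_def sum_distrib_left mult_ac)
qed

lemma payoff_transparent:
  assumes "\<forall>a w. u a w = v a"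
  shows "payoff \<mu> u \<sigma> \<rho> = (\<Sum>m\<in>UNIV. msg_prob \<mu> \<sigma> m * sender_value v \<rho> m)"
proof -
  have "payoff \<mu> u \<sigma> \<rho> = (\<Sum>w\<in>UNIV. \<Sum>m\<in>UNIV. \<mu> w * \<sigma> w m * sender_value v \<rho> m)"
    unfolding payoff_def sender_value_def using assms by (simp add: sum_distrib_left mult_ac)
  also have "\<dots> = (\<Sum>m\<in>UNIV. msg_prob \<mu> \<sigma> m * sender_value v \<rho> m)"
    unfolding msg_prob_def by (subst sum.swap) (simp add: sum_distrib_right)
  finally show ?thesis .
qed

lemma payoff_pure_act: "payoff \<mu> u \<sigma> (pure_act f) = (\<Sum>m\<in>UNIV. interim_payoff \<mu> u \<sigma> m (f m))"
  unfolding payoff_eq_sum_interim_payoff sum_pure_act_mult ..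

lemma sum_msg_prob: "msg_strat \<sigma> \<Longrightarrow> sum (msg_prob \<mu> \<sigma>) UNIV = sum \<mu> UNIV"
  unfolding msg_prob_def by (subst sum.swap) (simp add: sum_distrib_left[symmetric] msg_strat_sum)

lemma msg_prob_nonneg: "(\<forall>w. 0 \<le> \<mu> w) \<Longrightarrow> msg_strat \<sigma> \<Longrightarrow> 0 \<le> msg_prob \<mu> \<sigma> m"
  unfolding msg_prob_def by (auto intro!: sum_nonneg simp: msg_strat_nonneg)

lemma sum_interim_payoff:
  "msg_strat \<sigma> \<Longrightarrow> (\<Sum>m\<in>UNIV. interim_payoff \<mu> u \<sigma> m a) = (\<Sum>w\<in>UNIV. \<mu> w * u a w)"
  unfolding interim_payoff_def
  by (subst sum.swap) (simp add: sum_distrib_right[symmetric] mult.commute[of "\<mu> _"] mult.assoc msg_strat_sum)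

lemma interim_payoff_unused_msg:
  assumes "\<forall>w. 0 < \<mu> w" "msg_strat \<sigma>" "msg_prob \<mu> \<sigma> m = 0"
  shows "interim_payoff \<mu> u \<sigma> m a = 0"
proof -
  have "\<forall>w\<in>UNIV. \<mu> w * \<sigma> w m = 0"
    using assms(3) unfolding msg_prob_def
    by (subst sum_nonneg_eq_0_iff[symmetric]) (auto simp: assms(1) less_imp_le msg_strat_nonneg[OF assms(2)])
  then show ?thesis
    using assms(1) unfolding interim_payoff_def by (simp add: less_imp_neq[symmetric])
qed

lemma interim_payoff_pure_msg:
  "interim_payoff \<mu> u (pure_msg m0) m a = (if m = m0 then \<Sum>w\<in>UNIV. \<mu> w * u a w else 0)"
  by (simp add: interim_payoff_def pure_msg_def)

lemma payoff_le_sum_prior: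
  assumes "msg_strat \<sigma>" "act_strat \<rho>" "\<forall>w. 0 \<le> \<mu> w" "\<forall>a w. u a w \<le> 1"
  shows "payoff \<mu> u \<sigma> \<rho> \<le> sum \<mu> UNIV"
proof -
  have "payoff \<mu> u \<sigma> \<rho> \<le> (\<Sum>w\<in>UNIV. \<Sum>m\<in>UNIV. \<Sum>a\<in>UNIV. \<mu> w * \<sigma> w m * \<rho> m a)"
    unfolding payoff_def using assms
    by (intro sum_mono mult_left_le) (auto simp: msg_strat_nonneg act_strat_nonneg)
  also have "\<dots> = sum \<mu> UNIV"
    using assms by (simp add: sum_distrib_left[symmetric] msg_strat_sum act_strat_sum)
  finally show ?thesis .
qed

lemma payoff_le_persuasion_payoff:
  fixes \<sigma> :: "'w::finite \<Rightarrow> 'm::finite \<Rightarrow> real"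
  assumes "\<forall>w. 0 \<le> \<mu> w" "\<forall>a w. uS a w \<le> 1" "R_BR \<mu> uR \<sigma> \<rho>"
  shows "payoff \<mu> uS \<sigma> \<rho> \<le> persuasion_payoff \<mu> uS uR TYPE('m)"
  unfolding persuasion_payoff_def
proof (rule cSup_upper)
  show "bdd_above {payoff \<mu> uS \<sigma> \<rho> |(\<sigma>::'w \<Rightarrow> 'm \<Rightarrow> real) \<rho>. R_BR \<mu> uR \<sigma> \<rho>}"
    using payoff_le_sum_prior assms(1,2) unfolding R_BR_def bdd_above_def by blast
qed (use assms(3) in blast)

lemma R_BR_pure_act:
  fixes \<sigma> :: "'w::finite \<Rightarrow> 'm::finite \<Rightarrow> real" and f :: "'m \<Rightarrow> 'a::finite"
  assumes "msg_strat \<sigma>" "\<forall>m a. interim_payoff \<mu> u \<sigma> m a \<le> interim_payoff \<mu> u \<sigma> m (f m)"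
  shows "R_BR \<mu> u \<sigma> (pure_act f)"
  unfolding R_BR_def
proof (intro conjI assms(1) act_strat_pure_act allI impI)
  fix \<rho>' :: "'m \<Rightarrow> 'a \<Rightarrow> real" assume \<rho>': "act_strat \<rho>'"
  have "payoff \<mu> u \<sigma> \<rho>' \<le> (\<Sum>m\<in>UNIV. \<Sum>a\<in>UNIV. \<rho>' m a * interim_payoff \<mu> u \<sigma> m (f m))"
    unfolding payoff_eq_sum_interim_payoff
    by (intro sum_mono mult_left_mono act_strat_nonneg[OF \<rho>'] assms(2)[rule_format])
  also have "\<dots> = payoff \<mu> u \<sigma> (pure_act f)"
    using act_strat_sum[OF \<rho>'] by (simp add: payoff_pure_act sum_distrib_right[symmetric])
  finally show "payoff \<mu> u \<sigma> \<rho>' \<le> payoff \<mu> u \<sigma> (pure_act f)" .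
qed

text \<open>Shifting the weight of a supported action onto any other action must not help the receiver.\<close>

lemma R_BR_support_optimal:
  assumes br: "R_BR \<mu> u \<sigma> \<rho>" and pos: "0 < \<rho> m a"
  shows "interim_payoff \<mu> u \<sigma> m a' \<le> interim_payoff \<mu> u \<sigma> m a"
proof (cases "a = a'")
  case False
  let ?I = "interim_payoff \<mu> u \<sigma>"
  define r where "r x = \<rho> m x + (if x = a' then \<rho> m a else 0) - (if x = a then \<rho> m a else 0)" for x
  have as: "act_strat \<rho>" using br R_BR_def by blast
  have "is_dist r"
    unfolding is_dist_def r_def
    using act_strat_nonneg[OF as, of m] act_strat_sum[OF as, of m] pos False
    by (auto simp: sum.distrib sum_subtractf intro: add_nonneg_nonneg)
  then have "act_strat (\<rho>(m := r))" using as unfolding act_strat_def by auto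
  then have le: "payoff \<mu> u \<sigma> (\<rho>(m := r)) \<le> payoff \<mu> u \<sigma> \<rho>" using br R_BR_def by blast
  have split: "payoff \<mu> u \<sigma> q = (\<Sum>x\<in>UNIV. q m x * ?I m x) +
     (\<Sum>m'\<in>UNIV-{m}. \<Sum>x\<in>UNIV. q m' x * ?I m' x)" for q
    unfolding payoff_eq_sum_interim_payoff by (simp add: sum.remove[of UNIV m])
  have "(\<Sum>x\<in>UNIV. r x * ?I m x) = (\<Sum>x\<in>UNIV. \<rho> m x * ?I m x) + \<rho> m a * ?I m a' - \<rho> m a * ?I m a"
  proof -
    have "r x * ?I m x = \<rho> m x * ?I m x + (if x = a' then \<rho> m a * ?I m x else 0)
        - (if x = a then \<rho> m a * ?I m x else 0)" for x
      unfolding r_def by (simp add: algebra_simps)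
    then show ?thesis by (simp add: sum.distrib sum_subtractf)
  qed
  then have "\<rho> m a * ?I m a' \<le> \<rho> m a * ?I m a"
    using le split[of "\<rho>(m := r)"] split[of \<rho>] by simp
  then show ?thesis using pos by simp
qed simp

lemma payoff_pure_act_const:
  assumes "\<forall>a w. u a w = v a" "msg_strat \<sigma>"
  shows "payoff \<mu> u \<sigma> (pure_act (\<lambda>_. a0)) = v a0 * sum \<mu> UNIV"
  unfolding payoff_transparent[OF assms(1)] sender_value_def sum_pure_act_mult
  by (simp add: sum_distrib_left[symmetric] sum_msg_prob[OF assms(2)] mult.commute)

lemma simple_babbling_eq_pure:
  fixes \<mu> :: "'w::finite \<Rightarrow> real" and m0 :: "'m::finite" and a0 :: "'a::finite"
  assumes "\<forall>a w. uS a w = v a" "\<forall>a. (\<Sum>w\<in>UNIV. \<mu> w * uR a w) \<le> (\<Sum>w\<in>UNIV. \<mu> w * uR a0 w)"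
  shows "simple_babbling_eq \<mu> uS uR (pure_msg m0) (pure_act (\<lambda>_. a0))"
proof -
  have "S_BR \<mu> uS (pure_msg m0) (pure_act (\<lambda>_. a0))"
    unfolding S_BR_def
    by (simp add: payoff_pure_act_const[OF assms(1)] msg_strat_pure_msg act_strat_pure_act)
  moreover have "R_BR \<mu> uR (pure_msg m0) (pure_act (\<lambda>_. a0))"
    using assms(2) by (intro R_BR_pure_act msg_strat_pure_msg) (simp add: interim_payoff_pure_msg)
  moreover have "msgs_used (pure_msg m0 :: 'w \<Rightarrow> 'm \<Rightarrow> real) = {m0}"
    by (auto simp: msgs_used_def pure_msg_def)
  ultimately show ?thesis
    by (auto simp: simple_babbling_eq_def cheap_talk_eq_def pure_act_def)
qed

text \<open>Sending the message of highest sender value with certainty must not help the sender.\<close>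

lemma S_BR_transparent_used_msg:
  assumes br: "S_BR \<mu> u \<sigma> \<rho>" and transp: "\<forall>a w. u a w = v a" and \<mu>: "\<forall>w. 0 \<le> \<mu> w"
    and used: "0 < msg_prob \<mu> \<sigma> m"
  shows "payoff \<mu> u \<sigma> \<rho> = sender_value v \<rho> m * sum \<mu> UNIV"
proof -
  let ?e = "sender_value v \<rho>" and ?q = "msg_prob \<mu> \<sigma>"
  have ms: "msg_strat \<sigma>" using br S_BR_def by blast
  obtain mE where mE: "Max (range ?e) = ?e mE" using obtains_MAX[of UNIV ?e] by auto
  have eE: "?e m' \<le> ?e mE" for m' using mE[symmetric] by simp
  have "msg_prob \<mu> (pure_msg mE) = (\<lambda>m'. if m' = mE then sum \<mu> UNIV else 0)"
    by (simp add: fun_eq_iff msg_prob_def pure_msg_def)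
  then have "payoff \<mu> u (pure_msg mE) \<rho> = ?e mE * sum \<mu> UNIV"
    unfolding payoff_transparent[OF transp] by (simp add: sum_if_eq_mult)
  then have dev: "?e mE * sum \<mu> UNIV \<le> payoff \<mu> u \<sigma> \<rho>"
    using br msg_strat_pure_msg unfolding S_BR_def by metis
  have gap: "(\<Sum>m'\<in>UNIV. ?q m' * (?e mE - ?e m')) = ?e mE * sum \<mu> UNIV - payoff \<mu> u \<sigma> \<rho>"
    unfolding payoff_transparent[OF transp]
    by (simp add: algebra_simps sum_subtractf sum_distrib_left sum_msg_prob[OF ms, symmetric])
  have terms_nonneg: "0 \<le> ?q m' * (?e mE - ?e m')" for m'
    using eE msg_prob_nonneg[OF \<mu> ms] by simp
  have "?q m * (?e mE - ?e m) \<le> 0"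
    using member_le_sum[of m UNIV "\<lambda>m'. ?q m' * (?e mE - ?e m')"] terms_nonneg gap dev by simp
  then have "?e m = ?e mE" using used eE[of m] by (simp add: mult_le_0_iff)
  moreover have "payoff \<mu> u \<sigma> \<rho> \<le> ?e mE * sum \<mu> UNIV"
    using sum_nonneg[of UNIV "\<lambda>m'. ?q m' * (?e mE - ?e m')"] terms_nonneg gap by simp
  ultimately show ?thesis using dev by simp
qed

lemma sender_value_le_supported:
  assumes "act_strat \<rho>"
  obtains a where "0 < \<rho> m a" "sender_value v \<rho> m \<le> v a"
proof -
  define S where "S = {a. 0 < \<rho> m a}"
  have "S \<noteq> {}"
  proof
    assume "S = {}"
    then have "\<rho> m a = 0" for a
      using act_strat_nonneg[OF assms, of m a] unfolding S_def by (metis empty_Collect_eq order_le_less)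
    then show False using act_strat_sum[OF assms, of m] by simp
  qed
  then obtain a where a: "a \<in> S" "Max (v ` S) = v a" using obtains_MAX[of S v] by auto
  have "sender_value v \<rho> m \<le> (\<Sum>a'\<in>UNIV. \<rho> m a' * v a)"
    unfolding sender_value_def
  proof (rule sum_mono)
    fix a'
    show "\<rho> m a' * v a' \<le> \<rho> m a' * v a"
    proof (cases "a' \<in> S")
      case True
      then have "v a' \<le> Max (v ` S)" by simp
      then show ?thesis using True a(2) by (simp add: S_def mult_left_mono)
    next
      case False then show ?thesis using act_strat_nonneg[OF assms, of m a'] by (simp add: S_def)
    qed
  qed
  also have "\<dots> = v a" using act_strat_sum[OF assms] by (simp add: sum_distrib_right[symmetric])
  finally show ?thesis using that a(1) S_def by blast
qed

lemma cheap_talk_eq_purification: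
  fixes \<sigma> :: "'w::finite \<Rightarrow> 'm::finite \<Rightarrow> real" and \<rho> :: "'m \<Rightarrow> 'a::finite \<Rightarrow> real"
  assumes eq: "cheap_talk_eq \<mu> uS uR \<sigma> \<rho>" and transp: "\<forall>a w. uS a w = v a"
    and \<mu>: "\<forall>w. 0 \<le> \<mu> w" "sum \<mu> UNIV = 1"
  obtains f where "R_BR \<mu> uR \<sigma> (pure_act f)"
    and "\<And>m. 0 < msg_prob \<mu> \<sigma> m \<Longrightarrow> payoff \<mu> uS \<sigma> \<rho> \<le> v (f m)"
proof -
  have sbr: "S_BR \<mu> uS \<sigma> \<rho>" and rbr: "R_BR \<mu> uR \<sigma> \<rho>" using eq unfolding cheap_talk_eq_def by auto
  have as: "act_strat \<rho>" and ms: "msg_strat \<sigma>" using rbr R_BR_def by auto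
  have "\<forall>m. \<exists>a. 0 < \<rho> m a \<and> sender_value v \<rho> m \<le> v a"
    using sender_value_le_supported[OF as] by metis
  then obtain f where f: "\<And>m. 0 < \<rho> m (f m)" "\<And>m. sender_value v \<rho> m \<le> v (f m)"
    by metis
  have "R_BR \<mu> uR \<sigma> (pure_act f)"
    using R_BR_support_optimal[OF rbr f(1)] by (intro R_BR_pure_act ms) blast
  moreover have "payoff \<mu> uS \<sigma> \<rho> \<le> v (f m)" if "0 < msg_prob \<mu> \<sigma> m" for m
    using S_BR_transparent_used_msg[OF sbr transp \<mu>(1) that] f(2)[of m] \<mu>(2) by simp
  ultimately show ?thesis using that by blast
qed

text \<open>Sum the receiver's optimality conditions over the messages.\<close>

lemma pooling_action_prior_optimal:
  fixes \<sigma> :: "'w::finite \<Rightarrow> 'm::finite \<Rightarrow> real" and f :: "'m \<Rightarrow> 'a::finite"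
  assumes br: "R_BR \<mu> u \<sigma> (pure_act f)" and \<mu>: "\<forall>w. 0 < \<mu> w"
    and pool: "\<And>m. 0 < msg_prob \<mu> \<sigma> m \<Longrightarrow> f m = a0"
  shows "(\<Sum>w\<in>UNIV. \<mu> w * u a w) \<le> (\<Sum>w\<in>UNIV. \<mu> w * u a0 w)"
proof -
  have ms: "msg_strat \<sigma>" using br R_BR_def by blast
  have "interim_payoff \<mu> u \<sigma> m a \<le> interim_payoff \<mu> u \<sigma> m a0" for m
  proof (cases "0 < msg_prob \<mu> \<sigma> m")
    case True
    have "0 < pure_act f m (f m)" by (simp add: pure_act_def)
    then show ?thesis using R_BR_support_optimal[OF br] pool[OF True] by metis
  next
    case False
    then have "msg_prob \<mu> \<sigma> m = 0" using msg_prob_nonneg[OF _ ms, of \<mu> m] \<mu> by (simp add: less_imp_le)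
    then have "interim_payoff \<mu> u \<sigma> m a' = 0" for a'
      by (rule interim_payoff_unused_msg[OF \<mu> ms])
    then show ?thesis by simp
  qed
  then have "(\<Sum>m\<in>UNIV. interim_payoff \<mu> u \<sigma> m a) \<le> (\<Sum>m\<in>UNIV. interim_payoff \<mu> u \<sigma> m a0)"
    by (rule sum_mono)
  then show ?thesis unfolding sum_interim_payoff[OF ms] .
qed

lemma exists_simple_babbling_eq:
  fixes \<mu> :: "'w::finite \<Rightarrow> real" and uS uR :: "'a::finite \<Rightarrow> 'w \<Rightarrow> real"
  assumes "\<forall>a w. uS a w = v a"
  shows "\<exists>(\<sigma>::'w \<Rightarrow> 'm::finite \<Rightarrow> real) \<rho>. simple_babbling_eq \<mu> uS uR \<sigma> \<rho>"
proof -
  let ?R = "\<lambda>a. \<Sum>w\<in>UNIV. \<mu> w * uR a w"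
  obtain a0 where a0: "Max (range ?R) = ?R a0" using obtains_MAX[of UNIV ?R] by auto
  have "?R a \<le> ?R a0" for a using Max_ge[of "range ?R" "?R a"] a0 by simp
  then have "simple_babbling_eq \<mu> uS uR (pure_msg (undefined::'m)) (pure_act (\<lambda>_. a0))"
    by (intro simple_babbling_eq_pure[OF assms]) blast
  then show ?thesis by blast
qed

lemma cheap_talk_eq_beyond_gap:
  fixes \<mu> :: "'w::finite \<Rightarrow> real" and uS uR :: "'a::finite \<Rightarrow> 'w \<Rightarrow> real"
  assumes transp: "\<forall>a w. uS a w = v a" and noval: "commitment_no_value \<mu> uS uR TYPE('m)"
  obtains \<sigma> :: "'w \<Rightarrow> 'm::finite \<Rightarrow> real" and \<rho> where "cheap_talk_eq \<mu> uS uR \<sigma> \<rho>"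
    and "\<And>a. payoff \<mu> uS \<sigma> \<rho> \<le> v a \<Longrightarrow> persuasion_payoff \<mu> uS uR TYPE('m) \<le> v a"
proof -
  define CS where "CS = {payoff \<mu> uS \<sigma> \<rho> | (\<sigma>::'w \<Rightarrow> 'm \<Rightarrow> real) \<rho>. cheap_talk_eq \<mu> uS uR \<sigma> \<rho>}"
  have P_CS: "persuasion_payoff \<mu> uS uR TYPE('m) = Sup CS"
    using noval unfolding CS_def commitment_no_value_def cheap_talk_payoff_def by simp
  obtain \<sigma>0 :: "'w \<Rightarrow> 'm \<Rightarrow> real" and \<rho>0 where "simple_babbling_eq \<mu> uS uR \<sigma>0 \<rho>0"
    using exists_simple_babbling_eq[OF transp] by blast
  then have "CS \<noteq> {}" unfolding CS_def simple_babbling_eq_def by blast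
  then obtain s where "s \<in> CS" and s_gap: "\<And>x. x \<in> range v \<Longrightarrow> s \<le> x \<Longrightarrow> Sup CS \<le> x"
    using Sup_gap_witness[of "range v" CS] by auto
  then obtain \<sigma> :: "'w \<Rightarrow> 'm \<Rightarrow> real" and \<rho> where eq: "cheap_talk_eq \<mu> uS uR \<sigma> \<rho>"
    and s: "s = payoff \<mu> uS \<sigma> \<rho>"
    unfolding CS_def by blast
  have "persuasion_payoff \<mu> uS uR TYPE('m) \<le> v a" if "payoff \<mu> uS \<sigma> \<rho> \<le> v a" for a
    using s_gap[of "v a"] that s P_CS by simp
  with eq show ?thesis by (rule that)
qed

lemma exists_used_msg:
  assumes "msg_strat \<sigma>" "sum \<mu> UNIV = 1"
  obtains m where "0 < msg_prob \<mu> \<sigma> m"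
proof -
  have "\<exists>m. 0 < msg_prob \<mu> \<sigma> m"
  proof (rule ccontr)
    assume "\<not> ?thesis"
    then have "sum (msg_prob \<mu> \<sigma>) UNIV \<le> 0" by (simp add: sum_nonpos not_less)
    then show False using sum_msg_prob[OF assms(1)] assms(2) by simp
  qed
  then show ?thesis using that by blast
qed

theorem lemma12:
  fixes \<mu>0 :: "'w::finite \<Rightarrow> real"
    and uS uR :: "'a::finite \<Rightarrow> 'w \<Rightarrow> real"
  assumes prior: "\<forall>w. \<mu>0 w > 0" "sum \<mu>0 UNIV = 1"
    and msgs: "CARD('m) > CARD('w)" "CARD('m) > CARD('a)"
    and env: "environment uS uR"
    and transp: "transparent uS"
    and nodup: "transparent_no_dup uS"
    and noval: "commitment_no_value \<mu>0 uS uR TYPE('m::finite)"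
  shows "\<exists>(\<sigma>::'w \<Rightarrow> 'm \<Rightarrow> real) \<rho>. simple_babbling_eq \<mu>0 uS uR \<sigma> \<rho> \<and>
           payoff \<mu>0 uS \<sigma> \<rho> = persuasion_payoff \<mu>0 uS uR TYPE('m::finite)"
proof -
  obtain v where transp_v: "\<forall>a w. uS a w = v a" and inj_v: "\<forall>a a'. a \<noteq> a' \<longrightarrow> v a \<noteq> v a'"
    using nodup unfolding transparent_no_dup_def by blast
  have \<mu>_nonneg: "\<forall>w. 0 \<le> \<mu>0 w" using prior(1) by (simp add: less_imp_le)
  have uS_le_1: "\<forall>a w. uS a w \<le> 1" using env unfolding environment_def by blast
  define P where "P = persuasion_payoff \<mu>0 uS uR TYPE('m)"
  obtain \<sigma> :: "'w \<Rightarrow> 'm \<Rightarrow> real" and \<rho> where eq: "cheap_talk_eq \<mu>0 uS uR \<sigma> \<rho>"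
    and gap: "\<And>a. payoff \<mu>0 uS \<sigma> \<rho> \<le> v a \<Longrightarrow> P \<le> v a"
    unfolding P_def by (rule cheap_talk_eq_beyond_gap[OF transp_v noval]) blast
  obtain f where br: "R_BR \<mu>0 uR \<sigma> (pure_act f)"
    and f_ge: "\<And>m. 0 < msg_prob \<mu>0 \<sigma> m \<Longrightarrow> payoff \<mu>0 uS \<sigma> \<rho> \<le> v (f m)"
    using cheap_talk_eq_purification[OF eq transp_v \<mu>_nonneg prior(2)] by blast
  have ms: "msg_strat \<sigma>" using br R_BR_def by blast
  have "(\<Sum>m\<in>UNIV. msg_prob \<mu>0 \<sigma> m * v (f m)) \<le> P"
    using payoff_le_persuasion_payoff[OF \<mu>_nonneg uS_le_1 br]
    unfolding P_def payoff_transparent[OF transp_v] sender_value_def sum_pure_act_mult .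
  then have vf: "v (f m) = P" if "0 < msg_prob \<mu>0 \<sigma> m" for m
    using weighted_mean_le_imp_eq[of UNIV "msg_prob \<mu>0 \<sigma>" "\<lambda>m. v (f m)" P m] that
      msg_prob_nonneg[OF \<mu>_nonneg ms] sum_msg_prob[OF ms] prior(2) f_ge gap by simp
  obtain m0 where m0: "0 < msg_prob \<mu>0 \<sigma> m0" using exists_used_msg[OF ms prior(2)] .
  have "f m = f m0" if "0 < msg_prob \<mu>0 \<sigma> m" for m
    using vf[OF that] vf[OF m0] inj_v by metis
  then have "\<forall>a. (\<Sum>w\<in>UNIV. \<mu>0 w * uR a w) \<le> (\<Sum>w\<in>UNIV. \<mu>0 w * uR (f m0) w)"
    using pooling_action_prior_optimal[OF br prior(1), of "f m0"] by blast
  then have "simple_babbling_eq \<mu>0 uS uR (pure_msg m0) (pure_act (\<lambda>_. f m0))"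
    by (rule simple_babbling_eq_pure[OF transp_v])
  moreover have "payoff \<mu>0 uS (pure_msg m0) (pure_act (\<lambda>_. f m0)) = P"
    using vf[OF m0] prior(2) by (simp add: payoff_pure_act_const[OF transp_v msg_strat_pure_msg])
  ultimately show ?thesis unfolding P_def by blast
qed

end
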